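(* Let $a>2$ and $f_a(z)=z\big(z^2+(a-2)z+1-2a\big)$. Let $z_0$ be chosen uniformly at random from $[-a,2]$ and $z_{t+1}=f_a(z_t)$. Then $\lim_{t\to\infty}|z_t|=+\infty$ almost surely. *)

theory Defs
  imports "HOL-Probability.Probability"
begin

definition f :: "real \<Rightarrow> real \<Rightarrow> real" where
  "f a z = z * (z^2 + (a - 2) * z + 1 - 2 * a)"

end

theory Submission
  imports Defs
begin

text \<open>
  Put s = sqrt (a + 2). The substitution z = u^2 - a turns f a into the odd cubic
  G s u = u (u^2 - s^2 + 1), because f a (u^2 - a) = (G s u)^2 - a. Once a G-orbit leaves
  [-s, s] it grows geometrically, and so does the corresponding f-orbit. It remains to see
  that the u whose G-orbit stays in [-s, s] form a null set. In the angular coordinate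
  theta s u = arccos (u / s), each of the three monotone branches of G on [-s, -1], [-1, 1]
  and [1, s] stretches distances by a factor of at least expansion_rate s > 3 (for s = 2, G is
  the Chebyshev map 2 cos t -> 2 cos 3t and the factor is exactly 3). Hence the points that
  stay for n steps are covered by 3^n sets of angular diameter pi / expansion_rate s ^ n,
  whose total length is at most s pi (3 / expansion_rate s)^n -> 0.
\<close>

lemma negligible_if_small_covers:
  fixes S :: "real set" and N :: "nat \<Rightarrow> nat" and \<delta> :: "nat \<Rightarrow> real"
  assumes covers: "\<And>n. \<exists>F. finite F \<and> card F \<le> N n \<and> S \<subseteq> \<Union>F \<and>
                          (\<forall>C\<in>F. \<forall>x\<in>C. \<forall>y\<in>C. \<bar>x - y\<bar> \<le> \<delta> n)"
    and nonneg: "\<And>n. 0 \<le> \<delta> n"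
    and small: "(\<lambda>n. N n * \<delta> n) \<longlonglongrightarrow> 0"
  shows "negligible S"
  unfolding negligible_outer_le
proof (intro allI impI)
  fix e :: real
  assume "e > 0"
  then have "\<forall>\<^sub>F n in sequentially. N n * \<delta> n < e / 2"
    using small by (intro order_tendstoD(2)) auto
  then obtain n where n: "N n * \<delta> n < e / 2"
    by (auto simp: eventually_sequentially)
  obtain F where F: "finite F" "card F \<le> N n" "S \<subseteq> \<Union>F"
    and diam: "\<And>C x y. C \<in> F \<Longrightarrow> x \<in> C \<Longrightarrow> y \<in> C \<Longrightarrow> \<bar>x - y\<bar> \<le> \<delta> n"
    using covers[of n] by blast
  define c where "c C = (SOME x. x \<in> C)" for C :: "real set"
  define T where "T = (\<Union>C\<in>F. {c C - \<delta> n .. c C + \<delta> n})"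
  have "S \<subseteq> T"
  proof
    fix x assume "x \<in> S"
    then obtain C where C: "C \<in> F" "x \<in> C" using F(3) by blast
    then have "c C \<in> C" unfolding c_def by (metis some_in_eq empty_iff)
    then have "\<bar>x - c C\<bar> \<le> \<delta> n" using diam C by blast
    then have "x \<in> {c C - \<delta> n .. c C + \<delta> n}" by (simp add: abs_le_iff)
    then show "x \<in> T" using C(1) unfolding T_def by blast
  qed
  moreover have "T \<in> lmeasurable"
    unfolding T_def using F(1) by (intro fmeasurable.finite_UN lmeasurable_interval)
  moreover have "measure lebesgue T \<le> e"
  proof -
    have "measure lebesgue T \<le> (\<Sum>C\<in>F. measure lebesgue {c C - \<delta> n .. c C + \<delta> n})"
      unfolding T_def using F(1) by (intro measure_UNION_le) auto
    also have "\<dots> = card F * (2 * \<delta> n)"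
      using nonneg[of n] by simp
    also have "\<dots> \<le> N n * (2 * \<delta> n)"
      using F(2) nonneg[of n] by (intro mult_right_mono) auto
    finally show ?thesis using n by simp
  qed
  ultimately show "\<exists>T. S \<subseteq> T \<and> T \<in> lmeasurable \<and> measure lebesgue T \<le> e" by blast
qed

definition theta :: "real \<Rightarrow> real \<Rightarrow> real" where
  "theta s x = arccos (x / s)"

lemma theta_diff_le_pi:
  assumes "0 < s" "\<bar>x\<bar> \<le> s" "\<bar>y\<bar> \<le> s"
  shows "\<bar>theta s x - theta s y\<bar> \<le> pi"
proof -
  have "-1 \<le> x / s" "x / s \<le> 1" "-1 \<le> y / s" "y / s \<le> 1"
    using assms by (auto simp: abs_le_iff field_simps)
  then show ?thesis unfolding theta_def
    using arccos_bounded[of "x / s"] arccos_bounded[of "y / s"] by linarith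
qed

lemma theta_antimono:
  assumes "0 < s" "x \<le> y" "\<bar>x\<bar> \<le> s" "\<bar>y\<bar> \<le> s"
  shows "theta s y \<le> theta s x"
  unfolding theta_def using assms by (intro arccos_le_arccos) (auto simp: abs_le_iff field_simps)

lemma theta_minus:
  assumes "0 < s" "\<bar>x\<bar> \<le> s"
  shows "theta s (- x) = pi - theta s x"
  unfolding theta_def using arccos_minus[of "x / s"] assms by (auto simp: abs_le_iff field_simps)

lemma abs_diff_le_theta_diff:
  assumes "0 < s" "\<bar>x\<bar> \<le> s" "\<bar>y\<bar> \<le> s"
  shows "\<bar>x - y\<bar> \<le> s * \<bar>theta s x - theta s y\<bar>"
proof -
  have cos_lipschitz: "\<bar>cos a - cos b\<bar> \<le> \<bar>a - b\<bar>" for a b :: real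
  proof -
    have "\<bar>cos a - cos b\<bar> = 2 * \<bar>sin ((a + b) / 2)\<bar> * \<bar>sin ((b - a) / 2)\<bar>"
      unfolding cos_diff_cos by (simp add: abs_mult)
    also have "\<dots> \<le> 2 * 1 * \<bar>(b - a) / 2\<bar>"
      by (intro mult_mono abs_sin_x_le_abs_x) auto
    finally show ?thesis by simp
  qed
  have "s * cos (theta s x) = x" "s * cos (theta s y) = y"
    unfolding theta_def using assms by (simp_all add: abs_le_iff field_simps)
  then have "x - y = s * (cos (theta s x) - cos (theta s y))"
    by (simp add: right_diff_distrib)
  then have "\<bar>x - y\<bar> = s * \<bar>cos (theta s x) - cos (theta s y)\<bar>"
    using assms(1) by (simp add: abs_mult)
  also have "\<dots> \<le> s * \<bar>theta s x - theta s y\<bar>"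
    using assms(1) cos_lipschitz by (intro mult_left_mono) auto
  finally show ?thesis .
qed

lemma theta_has_real_derivative:
  assumes "\<bar>v\<bar> < s"
  shows "(theta s has_real_derivative - 1 / sqrt (s^2 - v^2)) (at v)"
proof -
  have s: "0 < s" using assms by linarith
  have "-1 < v / s" "v / s < 1" using assms by (auto simp: abs_less_iff field_simps)
  from DERIV_chain2[OF DERIV_arccos[OF this] DERIV_cdivide[OF DERIV_ident, of s]]
  have "(theta s has_real_derivative inverse (- sqrt (1 - (v / s)^2)) * (1 / s)) (at v)"
    unfolding theta_def by simp
  moreover have "sqrt (1 - (v / s)^2) * s = sqrt (s^2 - v^2)"
  proof -
    have "1 - (v / s)^2 = (s^2 - v^2) / s^2" using s by (simp add: field_simps)
    then show ?thesis using s by (simp add: real_sqrt_divide)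
  qed
  ultimately show ?thesis by (simp add: field_simps)
qed

lemma continuous_on_theta_comp:
  assumes "0 < s" "continuous_on A h" "\<And>u. u \<in> A \<Longrightarrow> \<bar>h u\<bar> \<le> s"
  shows "continuous_on A (\<lambda>u. theta s (h u))"
proof -
  have "-1 \<le> h u / s \<and> h u / s \<le> 1" if "u \<in> A" for u
    using assms(1) assms(3)[OF that] by (auto simp: abs_le_iff field_simps)
  then show ?thesis unfolding theta_def using assms(1,2) by (intro continuous_intros) auto
qed

lemma theta_expansion:
  fixes h h' :: "real \<Rightarrow> real"
  assumes s: "0 < s" and l: "0 \<le> l" and xy: "x \<le> y"
    and bounds: "\<bar>x\<bar> \<le> s" "\<bar>y\<bar> \<le> s" "\<bar>h x\<bar> \<le> s" "\<bar>h y\<bar> \<le> s"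
    and deriv: "\<And>v. (h has_real_derivative h' v) (at v)"
    and pos: "\<And>v. x < v \<Longrightarrow> v < y \<Longrightarrow> 0 < h' v"
    and stretch: "\<And>v. x < v \<Longrightarrow> v < y \<Longrightarrow> l^2 * (s^2 - (h v)^2) \<le> (h' v)^2 * (s^2 - v^2)"
  shows "l * (theta s x - theta s y) \<le> theta s (h x) - theta s (h y)"
proof -
  have cont: "continuous_on A h" for A
    using deriv by (meson DERIV_continuous continuous_at_imp_continuous_on)
  have incr: "\<exists>d. (h has_real_derivative d) (at w) \<and> 0 < d" if "x < w" "w < y" for w
    using deriv pos[OF that] by blast
  have inside: "\<bar>h v\<bar> < s" if v: "x < v" "v < y" for v
  proof -
    have "h x < h v"
      using v incr by (intro DERIV_pos_imp_increasing_open[OF v(1)] cont) auto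
    moreover have "h v < h y"
      using v incr by (intro DERIV_pos_imp_increasing_open[OF v(2)] cont) auto
    ultimately show ?thesis using bounds by auto
  qed
  define \<phi> where "\<phi> u = theta s (h u) - l * theta s u" for u
  have "\<phi> y \<le> \<phi> x"
  proof (rule DERIV_nonpos_imp_decreasing_open[OF xy])
    fix v assume v: "x < v" "v < y"
    define A where "A = sqrt (s^2 - v^2)"
    define B where "B = sqrt (s^2 - (h v)^2)"
    have "\<bar>v\<bar> < s" using v bounds by auto
    then have "v^2 < s^2" using power_strict_mono[of "\<bar>v\<bar>" s 2] by simp
    have "(h v)^2 < s^2" using inside[OF v] power_strict_mono[of "\<bar>h v\<bar>" s 2] by simp
    have "0 < A" "0 < B" unfolding A_def B_def using \<open>v^2 < s^2\<close> \<open>(h v)^2 < s^2\<close> by auto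
    have "(\<phi> has_real_derivative (- 1 / B) * h' v - l * (- 1 / A)) (at v)"
      unfolding \<phi>_def A_def B_def
      by (intro DERIV_diff DERIV_cmult DERIV_chain2[OF theta_has_real_derivative deriv]
            theta_has_real_derivative inside v \<open>\<bar>v\<bar> < s\<close>)
    moreover have "l * B \<le> h' v * A"
    proof (rule power2_le_imp_le)
      show "(l * B)^2 \<le> (h' v * A)^2"
        unfolding A_def B_def power_mult_distrib
        using stretch[OF v] \<open>v^2 < s^2\<close> \<open>(h v)^2 < s^2\<close> by simp
      show "0 \<le> h' v * A" using pos[OF v] \<open>0 < A\<close> by simp
    qed
    then have "(- 1 / B) * h' v - l * (- 1 / A) \<le> 0"
      using \<open>0 < A\<close> \<open>0 < B\<close> by (simp add: field_simps)
    ultimately show "\<exists>d. (\<phi> has_real_derivative d) (at v) \<and> d \<le> 0" by blast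
  next
    have "\<bar>h u\<bar> \<le> s" if "u \<in> {x..y}" for u
      using that bounds inside[of u] by (cases "u = x \<or> u = y") auto
    moreover have "\<bar>u\<bar> \<le> s" if "u \<in> {x..y}" for u
      using that bounds by auto
    ultimately show "continuous_on {x..y} \<phi>"
      unfolding \<phi>_def using s
      by (intro continuous_intros continuous_on_theta_comp cont continuous_on_id) auto
  qed
  then show ?thesis unfolding \<phi>_def by (simp add: algebra_simps)
qed

definition G :: "real \<Rightarrow> real \<Rightarrow> real" where
  "G s u = u * (u^2 - s^2 + 1)"

lemma f_conj_G:
  assumes "s^2 = a + 2"
  shows "f a (u^2 - a) = (G s u)^2 - a"
  unfolding f_def G_def assms by (simp add: power2_eq_square algebra_simps)

lemma funpow_f_conj_G:
  assumes "s^2 = a + 2"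
  shows "(f a ^^ n) (u^2 - a) = ((G s ^^ n) u)^2 - a"
  by (induction n) (simp_all add: f_conj_G[OF assms])

lemma G_minus [simp]: "G s (- u) = - G s u"
  unfolding G_def by simp

lemma G_has_real_derivative: "(G s has_real_derivative 3 * u^2 - s^2 + 1) (at u)"
  unfolding G_def by (auto intro!: derivative_eq_intros simp: power2_eq_square algebra_simps)

lemma G_abs_ge:
  assumes "s^2 < u^2" "u^2 \<le> v^2"
  shows "(u^2 - s^2 + 1) * \<bar>v\<bar> \<le> \<bar>G s v\<bar>"
proof -
  have "\<bar>G s v\<bar> = (v^2 - s^2 + 1) * \<bar>v\<bar>"
    using assms unfolding G_def by (simp add: abs_mult)
  then show ?thesis using assms(2) by (simp add: mult_right_mono)
qed

lemma G_escapes: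
  assumes "0 \<le> s" "s < \<bar>u\<bar>"
  shows "filterlim (\<lambda>n. \<bar>(G s ^^ n) u\<bar>) at_top sequentially"
proof -
  define k where "k = u^2 - s^2 + 1"
  have "s^2 < \<bar>u\<bar>^2" using assms by (intro power_strict_mono) auto
  then have su: "s^2 < u^2" by simp
  then have "k > 1" unfolding k_def by simp
  have grow: "k^n * \<bar>u\<bar> \<le> \<bar>(G s ^^ n) u\<bar>" for n
  proof (induction n)
    case (Suc n)
    have "\<bar>u\<bar> \<le> k^n * \<bar>u\<bar>" using \<open>k > 1\<close> by (simp add: mult_le_cancel_right1)
    then have "u^2 \<le> ((G s ^^ n) u)^2" using Suc by (simp flip: abs_le_square_iff)
    then have "k * \<bar>(G s ^^ n) u\<bar> \<le> \<bar>(G s ^^ Suc n) u\<bar>"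
      unfolding k_def using G_abs_ge[OF su] by simp
    moreover have "k * (k^n * \<bar>u\<bar>) \<le> k * \<bar>(G s ^^ n) u\<bar>"
      using Suc \<open>k > 1\<close> by (intro mult_left_mono) auto
    ultimately show ?case by simp
  qed simp
  have "filterlim (\<lambda>n. norm (k^n)) at_top sequentially"
    using \<open>k > 1\<close> by (intro filterlim_at_infinity_imp_norm_at_top filterlim_realpow_sequentially_gt1) simp
  then have "filterlim (\<lambda>n. k^n * \<bar>u\<bar>) at_top sequentially"
    using \<open>k > 1\<close> assms by (intro filterlim_at_top_mult_tendsto_pos[OF tendsto_const]) auto
  then show ?thesis by (rule filterlim_at_top_mono) (simp add: grow)
qed

lemma f_orbit_escapes:
  assumes "s^2 = a + 2" "0 \<le> s" "s < \<bar>(G s ^^ t) u\<bar>"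
  shows "filterlim (\<lambda>n. \<bar>(f a ^^ n) (u^2 - a)\<bar>) at_top sequentially"
proof -
  have "filterlim (\<lambda>n. \<bar>(G s ^^ n) ((G s ^^ t) u)\<bar>) at_top sequentially"
    using assms(2,3) by (rule G_escapes)
  then have "filterlim (\<lambda>n. \<bar>(G s ^^ (n + t)) u\<bar>) at_top sequentially"
    by (simp add: funpow_add)
  then have "filterlim (\<lambda>n. \<bar>(G s ^^ n) u\<bar>) at_top sequentially"
    unfolding filterlim_at_top by (subst (asm) eventually_sequentially_seg)
  then have "filterlim (\<lambda>n. - a + \<bar>(G s ^^ n) u\<bar>^2) at_top sequentially"
    by (intro filterlim_tendsto_add_at_top[OF tendsto_const] filterlim_pow_at_top) auto
  then show ?thesis
    by (rule filterlim_at_top_mono) (simp add: funpow_f_conj_G[OF assms(1)] abs_ge_self)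
qed

text \<open>Where |u| < s and |G s u| < s, the square of expansion_rate s bounds
  G'(u)^2 (s^2 - u^2) / (s^2 - (G s u)^2), the squared factor by which G stretches theta.\<close>
definition expansion_rate :: "real \<Rightarrow> real" where
  "expansion_rate s = sqrt (9 + (s^2 - 4) * (s^2 + 2) / (2 * s^2 + 1))"

lemma expansion_rate_gt_3:
  assumes "2 < s"
  shows "3 < expansion_rate s"
proof -
  have "4 < s^2" using assms power_strict_mono[of 2 s 2] by simp
  then have "sqrt 9 < expansion_rate s"
    unfolding expansion_rate_def by (subst real_sqrt_less_iff) (simp add: add_pos_nonneg)
  then show ?thesis by simp
qed

lemma G_stretch:
  assumes "2 < s" "\<bar>v\<bar> \<le> s"
  shows "(expansion_rate s)^2 * (s^2 - (G s v)^2) \<le> (3 * v^2 - s^2 + 1)^2 * (s^2 - v^2)"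
proof -
  define D where "D = v^4 - (s^2 - 2) * v^2 + 1"
  have "4 < s^2" using assms power_strict_mono[of 2 s 2] by simp
  have "v^2 \<le> s^2" using assms(2) by (simp flip: abs_le_square_iff)
  have sq_diff: "s^2 - (G s v)^2 = (s^2 - v^2) * D"
    unfolding G_def D_def by (simp add: power2_eq_square power4_eq_xxxx algebra_simps)
  have deriv_sq: "(3 * v^2 - s^2 + 1)^2 = 9 * D + (s^2 - 4) * (3 * v^2 + s^2 + 2)"
    unfolding D_def by (simp add: power2_eq_square power4_eq_xxxx algebra_simps)
  have rate_sq: "(expansion_rate s)^2 = 9 + (s^2 - 4) * (s^2 + 2) / (2 * s^2 + 1)"
    unfolding expansion_rate_def using \<open>4 < s^2\<close> by (simp add: add_pos_nonneg)
  have "(expansion_rate s)^2 * D \<le> (3 * v^2 - s^2 + 1)^2"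
  proof (cases "0 \<le> D")
    case True
    have "D - (2 * s^2 + 1) = (v^2 - s^2) * (v^2 + 2)"
      unfolding D_def by (simp add: power2_eq_square power4_eq_xxxx algebra_simps)
    moreover have "(v^2 - s^2) * (v^2 + 2) \<le> 0"
      using \<open>v^2 \<le> s^2\<close> by (intro mult_nonpos_nonneg) auto
    moreover have "0 < 2 * s^2 + 1" by (simp add: add_nonneg_pos)
    ultimately have "D / (2 * s^2 + 1) \<le> 1" by simp
    then have "(s^2 - 4) * (s^2 + 2) * (D / (2 * s^2 + 1)) \<le> (s^2 - 4) * (s^2 + 2)"
      using \<open>4 < s^2\<close> by (intro mult_left_le) auto
    also have "\<dots> \<le> (s^2 - 4) * (3 * v^2 + s^2 + 2)"
      using \<open>4 < s^2\<close> by (intro mult_left_mono) auto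
    finally have "(s^2 - 4) * (s^2 + 2) * (D / (2 * s^2 + 1)) \<le> (s^2 - 4) * (3 * v^2 + s^2 + 2)" .
    moreover have "(expansion_rate s)^2 * D = 9 * D + (s^2 - 4) * (s^2 + 2) * (D / (2 * s^2 + 1))"
      unfolding rate_sq by (simp add: distrib_right)
    ultimately show ?thesis unfolding deriv_sq by linarith
  next
    case False
    then have "(expansion_rate s)^2 * D \<le> 0" by (simp add: mult_nonneg_nonpos)
    then show ?thesis using zero_le_power2[of "3 * v^2 - s^2 + 1"] by linarith
  qed
  then have "(expansion_rate s)^2 * D * (s^2 - v^2) \<le> (3 * v^2 - s^2 + 1)^2 * (s^2 - v^2)"
    using \<open>v^2 \<le> s^2\<close> by (intro mult_right_mono) auto
  then show ?thesis unfolding sq_diff by (simp add: mult_ac)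
qed

lemma G_right_branch_lower:
  assumes "2 < s" "1 \<le> x" "- s \<le> G s x"
  shows "s - 1 < x"
proof (rule ccontr)
  assume "\<not> s - 1 < x"
  then have "x * (x - s) \<le> x * (- 1)" using assms(2) by (intro mult_left_mono) auto
  then have "x^2 - s * x + 1 < 0"
    using assms(1,2) \<open>\<not> s - 1 < x\<close> by (cases "x = 1") (auto simp: power2_eq_square algebra_simps)
  moreover have "G s x + s = (x + s) * (x^2 - s * x + 1)"
    unfolding G_def by (simp add: power2_eq_square algebra_simps)
  moreover have "0 < x + s" using assms by simp
  ultimately have "G s x + s < 0" by (simp add: mult_pos_neg)
  with assms(3) show False by simp
qed

lemma theta_expansion_right:
  assumes s: "2 < s" and xy: "x \<le> y" and x: "x \<in> {1..s}" and y: "y \<in> {1..s}"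
    and Gx: "\<bar>G s x\<bar> \<le> s" and Gy: "\<bar>G s y\<bar> \<le> s"
  shows "expansion_rate s * (theta s x - theta s y) \<le> theta s (G s x) - theta s (G s y)"
proof (rule theta_expansion[where h' = "\<lambda>v. 3 * v^2 - s^2 + 1"])
  fix v assume v: "x < v" "v < y"
  have "s - 1 < x" using G_right_branch_lower[OF s] x Gx by auto
  then have "(s - 1)^2 < v^2" using s v by (intro power_strict_mono) auto
  moreover have "3 * (s - 1)^2 - s^2 + 1 = 2 * (s - 1) * (s - 2)" by (simp add: power2_eq_square algebra_simps)
  moreover have "0 < 2 * (s - 1) * (s - 2)" using s by simp
  ultimately show "0 < 3 * v^2 - s^2 + 1" by linarith
  show "(expansion_rate s)^2 * (s^2 - (G s v)^2) \<le> (3 * v^2 - s^2 + 1)^2 * (s^2 - v^2)"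
    using v x y by (intro G_stretch[OF s]) auto
qed (use assms expansion_rate_gt_3[OF s] G_has_real_derivative in auto)

lemma theta_expansion_middle:
  assumes s: "2 < s" and xy: "x \<le> y" and x: "x \<in> {-1..1}" and y: "y \<in> {-1..1}"
    and Gx: "\<bar>G s x\<bar> \<le> s" and Gy: "\<bar>G s y\<bar> \<le> s"
  shows "expansion_rate s * (theta s x - theta s y) \<le> theta s (G s y) - theta s (G s x)"
proof -
  have "expansion_rate s * (theta s x - theta s y) \<le> theta s (- G s x) - theta s (- G s y)"
  proof (rule theta_expansion[where h' = "\<lambda>v. - (3 * v^2 - s^2 + 1)"])
    fix v assume v: "x < v" "v < y"
    have "v^2 \<le> 1" using v x y by (auto simp: abs_square_le_1)
    moreover have "4 < s^2" using s power_strict_mono[of 2 s 2] by simp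
    ultimately show "0 < - (3 * v^2 - s^2 + 1)" by linarith
    show "(expansion_rate s)^2 * (s^2 - (- G s v)^2) \<le> (- (3 * v^2 - s^2 + 1))^2 * (s^2 - v^2)"
      using v x y s by (simp only: power2_minus) (intro G_stretch[OF s], auto)
  qed (use assms expansion_rate_gt_3[OF s] DERIV_minus[OF G_has_real_derivative] in auto)
  then show ?thesis using theta_minus s Gx Gy by simp
qed

definition branches :: "real \<Rightarrow> real set set" where
  "branches s = {{-s..-1}, {-1..1}, {1..s}}"

lemma G_expands_theta:
  assumes s: "2 < s" and I: "I \<in> branches s" and "x \<in> I" "y \<in> I"
    and "\<bar>G s x\<bar> \<le> s" "\<bar>G s y\<bar> \<le> s"
  shows "expansion_rate s * \<bar>theta s x - theta s y\<bar> \<le> \<bar>theta s (G s x) - theta s (G s y)\<bar>"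
proof -
  have ordered: "expansion_rate s * \<bar>theta s x - theta s y\<bar> \<le> \<bar>theta s (G s x) - theta s (G s y)\<bar>"
    if xy: "x \<le> y" and "x \<in> I" "y \<in> I" "\<bar>G s x\<bar> \<le> s" "\<bar>G s y\<bar> \<le> s" for x y
  proof -
    have "I \<subseteq> {-s..s}" using I s unfolding branches_def by auto
    then have "\<bar>x\<bar> \<le> s" "\<bar>y\<bar> \<le> s" using that(2,3) by (auto simp: abs_le_iff)
    then have "theta s y \<le> theta s x" using xy s by (intro theta_antimono) auto
    then have abs_eq: "\<bar>theta s x - theta s y\<bar> = theta s x - theta s y" by simp
    consider "I = {-s..-1}" | "I = {-1..1}" | "I = {1..s}" using I unfolding branches_def by blast
    then show ?thesis
    proof cases
      case 1
      then have "expansion_rate s * (theta s (- y) - theta s (- x))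
          \<le> theta s (G s (- y)) - theta s (G s (- x))"
        using that by (intro theta_expansion_right[OF s]) auto
      then show ?thesis unfolding abs_eq using that 1 s by (simp add: theta_minus)
    next
      case 2
      then have "expansion_rate s * (theta s x - theta s y) \<le> theta s (G s y) - theta s (G s x)"
        using that by (intro theta_expansion_middle[OF s]) auto
      then show ?thesis unfolding abs_eq by (metis abs_ge_self abs_minus_commute order_trans)
    next
      case 3
      then have "expansion_rate s * (theta s x - theta s y) \<le> theta s (G s x) - theta s (G s y)"
        using that by (intro theta_expansion_right[OF s]) auto
      then show ?thesis unfolding abs_eq by (metis abs_ge_self order_trans)
    qed
  qed
  show ?thesis
    using ordered[of x y] ordered[of y x] assms by (cases "x \<le> y") (auto simp: abs_minus_commute)
qed

definition trapped :: "real \<Rightarrow> nat \<Rightarrow> real set" where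
  "trapped s n = {u. \<forall>t\<le>n. \<bar>(G s ^^ t) u\<bar> \<le> s}"

lemma trapped_Suc: "trapped s (Suc n) = {u. \<bar>u\<bar> \<le> s} \<inter> G s -` trapped s n"
proof -
  have "(\<forall>t\<le>Suc n. P t) \<longleftrightarrow> P 0 \<and> (\<forall>t\<le>n. P (Suc t))" for P :: "nat \<Rightarrow> bool"
    by (simp only: less_Suc_eq_le[symmetric] All_less_Suc2)
  then show ?thesis unfolding trapped_def by (auto simp: funpow_Suc_right simp del: funpow.simps)
qed

definition theta_cover :: "real \<Rightarrow> real \<Rightarrow> real set \<Rightarrow> real set set \<Rightarrow> bool" where
  "theta_cover s r S F \<longleftrightarrow> finite F \<and> S \<subseteq> \<Union>F \<and>
     (\<forall>C\<in>F. C \<subseteq> {-s..s} \<and> (\<forall>x\<in>C. \<forall>y\<in>C. \<bar>theta s x - theta s y\<bar> \<le> r))"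

definition pullback_cover :: "real \<Rightarrow> real set set \<Rightarrow> real set set" where
  "pullback_cover s F = (\<lambda>(I, C). I \<inter> G s -` C) ` (branches s \<times> F)"

lemma card_pullback_cover:
  assumes "finite F"
  shows "card (pullback_cover s F) \<le> 3 * card F"
proof -
  have "finite (branches s)" "card (branches s) \<le> 3"
    unfolding branches_def using card_length[of "[{-s..-1}, {-1..1}, {1..s}]"] by auto
  then have "card (pullback_cover s F) \<le> card (branches s) * card F"
    unfolding pullback_cover_def using assms
    by (metis card_cartesian_product card_image_le finite_cartesian_product)
  also have "\<dots> \<le> 3 * card F" using \<open>card (branches s) \<le> 3\<close> by simp
  finally show ?thesis .
qed

lemma theta_cover_pullback:
  assumes s: "2 < s" and cover: "theta_cover s r (trapped s n) F"
  shows "theta_cover s (r / expansion_rate s) (trapped s (Suc n)) (pullback_cover s F)"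
proof -
  have F: "finite F" "trapped s n \<subseteq> \<Union>F"
    and F_small: "\<forall>C\<in>F. C \<subseteq> {-s..s} \<and> (\<forall>x\<in>C. \<forall>y\<in>C. \<bar>theta s x - theta s y\<bar> \<le> r)"
    using cover unfolding theta_cover_def by auto
  have "finite (pullback_cover s F)"
    unfolding pullback_cover_def branches_def using F(1) by simp
  moreover have "trapped s (Suc n) \<subseteq> \<Union>(pullback_cover s F)"
  proof
    fix u assume "u \<in> trapped s (Suc n)"
    then have "\<bar>u\<bar> \<le> s" "G s u \<in> trapped s n" unfolding trapped_Suc by auto
    then obtain C where "C \<in> F" "G s u \<in> C" using F(2) by blast
    moreover obtain I where "I \<in> branches s" "u \<in> I"
    proof -
      have "u \<in> {-s..-1} \<or> u \<in> {-1..1} \<or> u \<in> {1..s}"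
        using \<open>\<bar>u\<bar> \<le> s\<close> by (auto simp: abs_le_iff)
      then show thesis using that unfolding branches_def by blast
    qed
    ultimately have "u \<in> I \<inter> G s -` C" "I \<inter> G s -` C \<in> pullback_cover s F"
      unfolding pullback_cover_def by (auto intro!: image_eqI[of _ _ "(I, C)"])
    then show "u \<in> \<Union>(pullback_cover s F)" by blast
  qed
  moreover have "C' \<subseteq> {-s..s} \<and> (\<forall>x\<in>C'. \<forall>y\<in>C'. \<bar>theta s x - theta s y\<bar> \<le> r / expansion_rate s)"
    if C': "C' \<in> pullback_cover s F" for C'
  proof -
    obtain I C where IC: "I \<in> branches s" "C \<in> F" "C' = I \<inter> G s -` C"
      using C' unfolding pullback_cover_def by auto
    have "I \<subseteq> {-s..s}" using IC(1) s unfolding branches_def by auto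
    moreover have "\<bar>theta s x - theta s y\<bar> \<le> r / expansion_rate s" if "x \<in> C'" "y \<in> C'" for x y
    proof -
      have "G s x \<in> C" "G s y \<in> C" using that IC(3) by auto
      then have "C \<subseteq> {-s..s}" and close: "\<bar>theta s (G s x) - theta s (G s y)\<bar> \<le> r"
        using F_small IC(2) by auto
      then have "\<bar>G s x\<bar> \<le> s" "\<bar>G s y\<bar> \<le> s"
        using \<open>G s x \<in> C\<close> \<open>G s y \<in> C\<close> by (auto simp: abs_le_iff)
      then have "expansion_rate s * \<bar>theta s x - theta s y\<bar> \<le> r"
        using that IC close by (intro G_expands_theta[OF s IC(1), THEN order_trans]) auto
      then show ?thesis using expansion_rate_gt_3[OF s] by (simp add: pos_le_divide_eq mult.commute)
    qed
    ultimately show ?thesis using IC(3) by blast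
  qed
  ultimately show ?thesis unfolding theta_cover_def by blast
qed

lemma trapped_theta_cover:
  assumes s: "2 < s"
  shows "\<exists>F. card F \<le> 3^n \<and> theta_cover s (pi / expansion_rate s ^ n) (trapped s n) F"
proof (induction n)
  case 0
  have "trapped s 0 \<subseteq> {-s..s}" by (auto simp: trapped_def abs_le_iff)
  moreover have "\<bar>theta s x - theta s y\<bar> \<le> pi" if "x \<in> {-s..s}" "y \<in> {-s..s}" for x y
    using that s by (intro theta_diff_le_pi) auto
  ultimately have "theta_cover s pi (trapped s 0) {{-s..s}}"
    unfolding theta_cover_def by auto
  then show ?case by (intro exI[of _ "{{-s..s}}"]) simp
next
  case (Suc n)
  then obtain F where "card F \<le> 3^n" and cover: "theta_cover s (pi / expansion_rate s ^ n) (trapped s n) F"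
    by blast
  then have "card (pullback_cover s F) \<le> 3^Suc n"
    using card_pullback_cover[of F s] unfolding theta_cover_def by simp
  moreover have "theta_cover s (pi / expansion_rate s ^ Suc n) (trapped s (Suc n)) (pullback_cover s F)"
    using theta_cover_pullback[OF s cover] by (simp add: field_simps)
  ultimately show ?case by blast
qed

lemma negligible_trapped_forever:
  assumes s: "2 < s"
  shows "negligible (\<Inter>n. trapped s n)"
proof (rule negligible_if_small_covers[where N = "\<lambda>n. 3^n" and \<delta> = "\<lambda>n. s * (pi / expansion_rate s ^ n)"])
  have rate: "3 < expansion_rate s" using expansion_rate_gt_3[OF s] .
  fix n
  obtain F where "card F \<le> 3^n" and cover: "theta_cover s (pi / expansion_rate s ^ n) (trapped s n) F"
    using trapped_theta_cover[OF s] by blast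
  then have F: "finite F" "trapped s n \<subseteq> \<Union>F"
    and F_small: "\<forall>C\<in>F. C \<subseteq> {-s..s} \<and>
                    (\<forall>x\<in>C. \<forall>y\<in>C. \<bar>theta s x - theta s y\<bar> \<le> pi / expansion_rate s ^ n)"
    unfolding theta_cover_def by auto
  have "\<bar>x - y\<bar> \<le> s * (pi / expansion_rate s ^ n)" if "C \<in> F" "x \<in> C" "y \<in> C" for C x y
  proof -
    have "C \<subseteq> {-s..s}" and close: "\<bar>theta s x - theta s y\<bar> \<le> pi / expansion_rate s ^ n"
      using F_small that by auto
    then have "\<bar>x\<bar> \<le> s" "\<bar>y\<bar> \<le> s" using that by (auto simp: abs_le_iff)
    then have "\<bar>x - y\<bar> \<le> s * \<bar>theta s x - theta s y\<bar>" using s by (intro abs_diff_le_theta_diff) auto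
    also have "\<dots> \<le> s * (pi / expansion_rate s ^ n)" using s close by (intro mult_left_mono) auto
    finally show ?thesis .
  qed
  moreover have "(\<Inter>n. trapped s n) \<subseteq> \<Union>F" using F(2) by blast
  ultimately show "\<exists>F. finite F \<and> card F \<le> 3^n \<and> (\<Inter>n. trapped s n) \<subseteq> \<Union>F \<and>
      (\<forall>C\<in>F. \<forall>x\<in>C. \<forall>y\<in>C. \<bar>x - y\<bar> \<le> s * (pi / expansion_rate s ^ n))"
    using F(1) \<open>card F \<le> 3^n\<close> by blast
  show "0 \<le> s * (pi / expansion_rate s ^ n)" using s rate by simp
next
  have "(\<lambda>n. s * pi * (3 / expansion_rate s)^n) \<longlonglongrightarrow> 0"
    using expansion_rate_gt_3[OF s] by (intro tendsto_mult_right_zero LIMSEQ_power_zero) auto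
  then show "(\<lambda>n. real (3^n) * (s * (pi / expansion_rate s ^ n))) \<longlonglongrightarrow> 0"
    by (simp add: power_divide mult_ac)
qed

theorem lemma3:
  fixes a :: real
  assumes "a > 2"
  shows "AE z in uniform_measure lborel {-a..2}.
           filterlim (\<lambda>t::nat. \<bar>(f a ^^ t) z\<bar>) at_top sequentially"
proof -
  define s where "s = sqrt (a + 2)"
  have s2: "s^2 = a + 2" using assms by (simp add: s_def)
  have "sqrt 4 < s" unfolding s_def using assms by (subst real_sqrt_less_iff) simp
  then have s: "2 < s" by simp
  define E where "E = (\<lambda>u. u^2 - a) ` (\<Inter>n. trapped s n)"
  have "(\<lambda>u. u^2 - a) differentiable_on (\<Inter>n. trapped s n)"
    unfolding power2_eq_square
    by (intro differentiable_on_diff differentiable_on_mult differentiable_on_ident differentiable_on_const)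
  then have "negligible E"
    unfolding E_def using negligible_differentiable_image_negligible negligible_trapped_forever[OF s] by blast
  then have "AE z in lebesgue. z \<notin> E"
    by (intro AE_not_in) (simp add: negligible_iff_null_sets)
  then have "AE z in lborel. z \<notin> E"
    by (rule AE_completion_iff[THEN iffD1])
  moreover have "filterlim (\<lambda>t. \<bar>(f a ^^ t) z\<bar>) at_top sequentially"
    if "z \<in> {-a..2}" "z \<notin> E" for z
  proof -
    define u where "u = sqrt (z + a)"
    have z: "z = u^2 - a" using that(1) by (simp add: u_def)
    then have "u \<notin> (\<Inter>n. trapped s n)" using that(2) unfolding E_def by blast
    then obtain t where "s < \<bar>(G s ^^ t) u\<bar>" unfolding trapped_def by (auto simp: not_le)
    then show ?thesis unfolding z using f_orbit_escapes[OF s2] s by simp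
  qed
  ultimately show ?thesis by (intro AE_uniform_measureI) (auto elim!: eventually_mono)
qed

end
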